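(* Let $(M,\ast)$ be a $\Gamma$-hypersemigroup, and define a fuzzy $\Gamma$-hyperoperation on $M$ by $a\circ\gamma\circ b=\chi_{a\ast\gamma\ast b}$ for $a,b\in M$, $\gamma\in\Gamma$. Then $(M,\circ)$ is a fuzzy $\Gamma$-hypersemigroup.
   Context: $M,\Gamma$ are nonempty sets. A $\Gamma$-hypersemigroup is a set $M$ together with, for each $\gamma\in\Gamma$, a map $(x,y)\mapsto x\ast\gamma\ast y\subseteq M$, extended to subsets by unions, satisfying $(x\ast\alpha\ast y)\ast\beta\ast z=x\ast\alpha\ast(y\ast\beta\ast z)$ for all $x,y,z\in M$, $\alpha,\beta\in\Gamma$. $\chi_A$ is the characteristic function of $A\subseteq M$. A fuzzy subset of $M$ is a map $M\to[0,1]$; a fuzzy $\Gamma$-hyperoperation assigns to each $(a,\gamma,b)$ a fuzzy subset $a\circ\gamma\circ b$. For $a\in M$ and fuzzy $\mu$: $(a\circ\gamma\circ\mu)(r)=\bigvee_{t\in M}((a\circ\gamma\circ t)(r)\wedge\mu(t))$ if $\mu\ne0$, else $0$; $(\mu\circ\gamma\circ a)(r)=\bigvee_{t\in M}(\mu(t)\wedge(t\circ\gamma\circ a)(r))$ if $\mu\ne0$, else $0$. $(M,\circ)$ is a fuzzy $\Gamma$-hypersemigroup if $(a\circ\alpha\circ b)\circ\beta\circ c=a\circ\alpha\circ(b\circ\beta\circ c)$ for all $a,b,c\in M$, $\alpha,\beta\in\Gamma$. *)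

theory Defs
  imports "HOL-Analysis.Analysis"
begin

(* M is the type 'm, Gamma is the type 'g (types are nonempty).
   A Gamma-hyperoperation: H x g y is the subset x * g * y of M. *)
definition hyper_set :: "('m \<Rightarrow> 'g \<Rightarrow> 'm \<Rightarrow> 'm set) \<Rightarrow> 'm set \<Rightarrow> 'g \<Rightarrow> 'm set \<Rightarrow> 'm set" where
  "hyper_set H A g B = (\<Union>a\<in>A. \<Union>b\<in>B. H a g b)"

definition Gamma_hypersemigroup :: "('m \<Rightarrow> 'g \<Rightarrow> 'm \<Rightarrow> 'm set) \<Rightarrow> bool" where
  "Gamma_hypersemigroup H \<longleftrightarrow>
     (\<forall>x y z \<alpha> \<beta>. hyper_set H (H x \<alpha> y) \<beta> {z} = hyper_set H {x} \<alpha> (H y \<beta> z))"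

definition fuzzy_subset :: "('m \<Rightarrow> real) \<Rightarrow> bool" where
  "fuzzy_subset \<mu> \<longleftrightarrow> (\<forall>x. 0 \<le> \<mu> x \<and> \<mu> x \<le> 1)"

definition fuzzy_left :: "('m \<Rightarrow> 'g \<Rightarrow> 'm \<Rightarrow> 'm \<Rightarrow> real) \<Rightarrow> 'm \<Rightarrow> 'g \<Rightarrow> ('m \<Rightarrow> real) \<Rightarrow> 'm \<Rightarrow> real" where
  "fuzzy_left F a g \<mu> = (if \<mu> = (\<lambda>_. 0) then (\<lambda>_. 0)
       else (\<lambda>r. SUP t. min (F a g t r) (\<mu> t)))"

definition fuzzy_right :: "('m \<Rightarrow> 'g \<Rightarrow> 'm \<Rightarrow> 'm \<Rightarrow> real) \<Rightarrow> ('m \<Rightarrow> real) \<Rightarrow> 'g \<Rightarrow> 'm \<Rightarrow> 'm \<Rightarrow> real" where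
  "fuzzy_right F \<mu> g a = (if \<mu> = (\<lambda>_. 0) then (\<lambda>_. 0)
       else (\<lambda>r. SUP t. min (\<mu> t) (F t g a r)))"

definition fuzzy_Gamma_hyperoperation :: "('m \<Rightarrow> 'g \<Rightarrow> 'm \<Rightarrow> 'm \<Rightarrow> real) \<Rightarrow> bool" where
  "fuzzy_Gamma_hyperoperation F \<longleftrightarrow> (\<forall>a g b. fuzzy_subset (F a g b))"

definition fuzzy_Gamma_hypersemigroup :: "('m \<Rightarrow> 'g \<Rightarrow> 'm \<Rightarrow> 'm \<Rightarrow> real) \<Rightarrow> bool" where
  "fuzzy_Gamma_hypersemigroup F \<longleftrightarrow> fuzzy_Gamma_hyperoperation F \<and>
     (\<forall>a b c \<alpha> \<beta>. fuzzy_right F (F a \<alpha> b) \<beta> c = fuzzy_left F a \<alpha> (F b \<beta> c))"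

end

theory Submission
  imports Defs
begin

text \<open>A minimum of two indicators is an indicator and a supremum of indicators is the
  indicator of the union, so both fuzzy products of characteristic functions are the
  characteristic functions of the corresponding crisp products; fuzzy associativity is then
  the image of crisp associativity under \<open>\<chi>\<close>.\<close>

lemma SUP_indicator_eq_indicator_UN:
  "(SUP t. indicator (A t) x :: real) = indicator (\<Union>t. A t) x"
proof (cases "x \<in> (\<Union>t. A t)")
  case True
  then obtain t where "x \<in> A t" by blast
  then have "(SUP t. indicator (A t) x :: real) = 1"
    by (intro cSup_eq_maximum) (auto simp: indicator_def)
  with True show ?thesis by simp
next
  case False
  then show ?thesis by simp
qed

lemma SUP_min_indicator:
  "(SUP t. min (indicator A t) (indicator (B t) r) :: real) = indicator (\<Union>t\<in>A. B t) r"
  "(SUP t. min (indicator (B t) r) (indicator A t) :: real) = indicator (\<Union>t\<in>A. B t) r"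
proof -
  have "min (indicator A t) (indicator (B t) r) = (indicator (if t \<in> A then B t else {}) r :: real)"
    for t by (simp add: indicator_def)
  then have "(SUP t. min (indicator A t) (indicator (B t) r) :: real)
      = indicator (\<Union>t. if t \<in> A then B t else {}) r"
    by (simp only: SUP_indicator_eq_indicator_UN)
  also have "(\<Union>t. if t \<in> A then B t else {}) = (\<Union>t\<in>A. B t)"
    by auto
  finally show "(SUP t. min (indicator A t) (indicator (B t) r) :: real) = indicator (\<Union>t\<in>A. B t) r" .
  then show "(SUP t. min (indicator (B t) r) (indicator A t) :: real) = indicator (\<Union>t\<in>A. B t) r"
    by (simp add: min.commute)
qed

lemma indicator_eq_zero_fun_iff: "(indicator A :: 'a \<Rightarrow> real) = (\<lambda>_. 0) \<longleftrightarrow> A = {}"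
  by (auto simp: fun_eq_iff indicator_def)

lemma fuzzy_right_indicator:
  "fuzzy_right (\<lambda>a g b. indicator (H a g b) :: 'm \<Rightarrow> real) (indicator A) \<beta> c
     = indicator (hyper_set H A \<beta> {c})"
  by (auto simp: fuzzy_right_def hyper_set_def indicator_eq_zero_fun_iff SUP_min_indicator)

lemma fuzzy_left_indicator:
  "fuzzy_left (\<lambda>a g b. indicator (H a g b) :: 'm \<Rightarrow> real) a \<alpha> (indicator B)
     = indicator (hyper_set H {a} \<alpha> B)"
  by (auto simp: fuzzy_left_def hyper_set_def indicator_eq_zero_fun_iff SUP_min_indicator)

lemma fuzzy_Gamma_hyperoperation_indicator:
  "fuzzy_Gamma_hyperoperation (\<lambda>a g b. indicator (H a g b) :: 'm \<Rightarrow> real)"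
  by (simp add: fuzzy_Gamma_hyperoperation_def fuzzy_subset_def indicator_def)

theorem theorem4p18:
  fixes H :: "'m \<Rightarrow> 'g \<Rightarrow> 'm \<Rightarrow> 'm set"
  assumes "Gamma_hypersemigroup H"
  shows "fuzzy_Gamma_hypersemigroup (\<lambda>a g b. indicator (H a g b) :: 'm \<Rightarrow> real)"
  using assms fuzzy_Gamma_hyperoperation_indicator
  by (simp add: fuzzy_Gamma_hypersemigroup_def Gamma_hypersemigroup_def
      fuzzy_right_indicator fuzzy_left_indicator)

end
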